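(* Let $n\ge 1$, $p$ a positive integer, let $\{b_{ij}:1\le j\le i\le n\}$ be real scalars with $b_{ij}:=b_{ji}$ for $i<j$, and suppose $\sigma_*:=\max_{ij}|b_{ij}|\le 1$; let $\sigma:=\max_i\sqrt{\sum_j b_{ij}^2}$. Then for any $u\in[n]$ and any $\mathbf{s}\in\mathcal{S}_{2p}$, $$\sum_{\mathbf{u}\in\Gamma_{\mathbf{s},u}} b_{u_1u_2}b_{u_2u_3}\cdots b_{u_{2p}u_1}\le \sigma^{2(m(\mathbf{s})-1)}.$$ In particular, if $X$ is the $n\times n$ symmetric random matrix with $X_{ij}=X_{ji}=g_{ij}b_{ij}$ ($i\ge j$), where $\{g_{ij}:i\ge j\}$ are i.i.d. $N(0,1)$, and $g\sim N(0,1)$, then $$\mathbb{E}\operatorname{Tr}[X^{2p}]\le n\sum_{\mathbf{s}\in\mathcal{S}_{2p}}\sigma^{2(m(\mathbf{s})-1)}\prod_{i\ge1}\mathbb{E}[g^i]^{n_i(\mathbf{s})}.$$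
   Context: $[n]=\{1,\dots,n\}$. Let $G_n$ be the complete graph on $[n]$ with self-loops, with edge set $\{\{u,u'\}:u,u'\in[n]\}$. Each $\mathbf{u}=(u_1,\dots,u_{2p})\in[n]^{2p}$ is identified with the cycle $u_1\to u_2\to\cdots\to u_{2p}\to u_1$ of length $2p$ in $G_n$. Denote by $n_i(\mathbf{u})$ the number of distinct edges visited exactly $i$ times by the cycle. A cycle is even if every edge it visits is visited an even number of times. The shape $\mathbf{s}(\mathbf{u})$ of $\mathbf{u}$ is obtained by relabeling the vertices in order of first appearance by $1,2,3,\dots$ (e.g. $7\to3\to5\to4\to3\to5\to4\to3\to7$ has shape $1\to2\to3\to4\to2\to3\to4\to2\to1$). $\mathcal{S}_{2p}$ is the set of shapes of even cycles of length $2p$; for $u\in[n]$, $\Gamma_{\mathbf{s},u}:=\{\mathbf{u}\in[n]^{2p}:\mathbf{s}(\mathbf{u})=\mathbf{s},\ u_1=u\}$. Since $n_i(\mathbf{u})$ depends only on the shape, write $n_i(\mathbf{s})$; $m(\mathbf{s}):=\max_i s_i$ is the number of distinct vertices visited by a cycle of shape $\mathbf{s}$. *)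

theory Defs
  imports "HOL-Probability.Probability"
begin

(* A cycle u = (u_1,...,u_{2p}) is a list of length 2p (list index k = u_{k+1}).
   Its k-th step (k < length u) traverses the undirected edge {u_k, u_{k+1 mod len}}. *)
definition cyc_edge :: "nat list \<Rightarrow> nat \<Rightarrow> nat set" where
  "cyc_edge u k = {u ! k, u ! ((k + 1) mod length u)}"

definition edge_visits :: "nat list \<Rightarrow> nat set \<Rightarrow> nat" where
  "edge_visits u e = card {k. k < length u \<and> cyc_edge u k = e}"

definition cyc_edges :: "nat list \<Rightarrow> nat set set" where
  "cyc_edges u = cyc_edge u ` {..<length u}"

definition n_visits :: "nat \<Rightarrow> nat list \<Rightarrow> nat" where
  "n_visits i u = card {e \<in> cyc_edges u. edge_visits u e = i}"

definition even_cycle :: "nat list \<Rightarrow> bool" where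
  "even_cycle u \<longleftrightarrow> (\<forall>e \<in> cyc_edges u. even (edge_visits u e))"

(* shape: relabel vertices in order of first appearance by 1,2,3,...;
   the label of x is 1 + number of distinct vertices occurring before the first occurrence of x *)
definition shape :: "nat list \<Rightarrow> nat list" where
  "shape u = map (\<lambda>x. card (set (takeWhile (\<lambda>y. y \<noteq> x) u)) + 1) u"

definition cycles :: "nat \<Rightarrow> nat \<Rightarrow> nat list set" where
  "cycles n p = {u. length u = 2 * p \<and> set u \<subseteq> {1..n}}"

definition shapes_even :: "nat \<Rightarrow> nat \<Rightarrow> nat list set" where
  "shapes_even n p = shape ` {u \<in> cycles n p. even_cycle u}"

definition Gamma :: "nat \<Rightarrow> nat \<Rightarrow> nat list \<Rightarrow> nat \<Rightarrow> nat list set" where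
  "Gamma n p s v = {u \<in> cycles n p. shape u = s \<and> u ! 0 = v}"

definition m_shape :: "nat list \<Rightarrow> nat" where
  "m_shape s = Max (set s)"

definition cycle_weight :: "(nat \<Rightarrow> nat \<Rightarrow> real) \<Rightarrow> nat list \<Rightarrow> real" where
  "cycle_weight b u = (\<Prod>k<length u. b (u ! k) (u ! ((k + 1) mod length u)))"

(* n x n matrices indexed by [n] = {1..n} *)
definition mat_mult :: "nat \<Rightarrow> (nat \<Rightarrow> nat \<Rightarrow> real) \<Rightarrow> (nat \<Rightarrow> nat \<Rightarrow> real) \<Rightarrow> nat \<Rightarrow> nat \<Rightarrow> real" where
  "mat_mult n A B = (\<lambda>i j. \<Sum>k\<in>{1..n}. A i k * B k j)"

primrec mat_pow :: "nat \<Rightarrow> (nat \<Rightarrow> nat \<Rightarrow> real) \<Rightarrow> nat \<Rightarrow> nat \<Rightarrow> nat \<Rightarrow> real" where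
  "mat_pow n A 0 = (\<lambda>i j. if i = j then 1 else 0)"
| "mat_pow n A (Suc k) = mat_mult n (mat_pow n A k) A"

definition mat_trace :: "nat \<Rightarrow> (nat \<Rightarrow> nat \<Rightarrow> real) \<Rightarrow> real" where
  "mat_trace n A = (\<Sum>i\<in>{1..n}. A i i)"

definition lower_idx :: "nat \<Rightarrow> (nat \<times> nat) set" where
  "lower_idx n = {(i, j). 1 \<le> j \<and> j \<le> i \<and> i \<le> n}"

definition gauss_mat :: "(nat \<Rightarrow> nat \<Rightarrow> real) \<Rightarrow> (nat \<times> nat \<Rightarrow> real) \<Rightarrow> nat \<Rightarrow> nat \<Rightarrow> real" where
  "gauss_mat b g = (\<lambda>i j. if j \<le> i then g (i, j) * b i j else g (j, i) * b j i)"

end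

theory Submission
  imports Defs
begin

text \<open>Fix a shape \<open>s\<close> and a start vertex \<open>v\<close>. A cycle of shape \<open>s\<close> is determined by the
  vertices at its discovery positions, where a vertex is visited for the first time, and the
  steps into these positions form a tree on its \<open>m(s)\<close> distinct vertices. Since the cycle is
  even, each discovery edge is traversed a second time, so the cycle weight is at most the
  product of the squares \<open>b\<^sup>2\<close> over the discovery steps. Summing this product over the labels
  of the tree leaf by leaf, each leaf contributes one row sum of squares, which is at most
  \<open>\<sigma>\<^sup>2\<close>.

  For the trace, \<open>Tr X^(2p)\<close> is the sum of the cycle weights of \<open>X\<close>. By independence the
  expectation of a cycle weight is its \<open>b\<close>-weight times the product of the Gaussian moments
  \<open>E[g^i]\<close> raised to the edge multiplicities \<open>n_i\<close>; it vanishes unless the cycle is even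
  and depends only on the shape, and grouping the cycles by shape and start vertex gives the
  second bound.\<close>

section \<open>Shapes and patterns\<close>

definition first_index :: "'a list \<Rightarrow> nat \<Rightarrow> nat" where
  "first_index s i = (LEAST j. s ! j = s ! i)"

lemma first_index_nth: "s ! first_index s i = s ! i"
  unfolding first_index_def by (rule LeastI[of _ i]) simp

lemma first_index_le: "first_index s i \<le> i"
  unfolding first_index_def by (rule Least_le) simp

lemma nth_before_first_index: "j < first_index s i \<Longrightarrow> s ! j \<noteq> s ! i"
  unfolding first_index_def using not_less_Least by blast

lemma first_index_eq_iff: "first_index s i = first_index s j \<longleftrightarrow> s ! i = s ! j"
  by (metis first_index_nth first_index_def)

lemma nth_first_index_notin_take: "s ! first_index s i \<notin> set (take (first_index s i) s)"
  by (auto simp: in_set_conv_nth first_index_nth dest: nth_before_first_index)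

lemma card_set_take_less:
  assumes "k < l" "l \<le> length s" "s ! k \<notin> set (take k s)"
  shows "card (set (take k s)) < card (set (take l s))"
proof (rule psubset_card_mono)
  have "s ! k \<in> set (take l s)"
    using assms by (auto simp: in_set_conv_nth intro!: exI[of _ k])
  moreover have "set (take k s) \<subseteq> set (take l s)"
    using assms by (intro set_take_subset_set_take) simp
  ultimately show "set (take k s) \<subset> set (take l s)" using assms(3) by blast
qed simp

definition first_label :: "nat list \<Rightarrow> nat \<Rightarrow> nat" where
  "first_label u x = card (set (takeWhile (\<lambda>y. y \<noteq> x) u)) + 1"

lemma shape_eq_map_first_label: "shape u = map (first_label u) u"
  by (simp add: shape_def first_label_def)

lemma length_shape [simp]: "length (shape u) = length u"
  by (simp add: shape_eq_map_first_label)

lemma first_label_nth: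
  assumes "i < length u"
  shows "first_label u (u ! i) = card (set (take (first_index u i) u)) + 1"
proof -
  have "takeWhile (\<lambda>y. y \<noteq> u ! i) u = take (first_index u i) u"
    using assms first_index_le[of u i]
    by (intro takeWhile_eq_take_P_nth) (auto simp: first_index_nth dest: nth_before_first_index)
  then show ?thesis by (simp add: first_label_def)
qed

lemma shape_nth_eq_iff:
  assumes "i < length u" "j < length u"
  shows "shape u ! i = shape u ! j \<longleftrightarrow> u ! i = u ! j"
proof
  assume eq: "shape u ! i = shape u ! j"
  have less: "shape u ! i < shape u ! j"
    if "i < length u" "j < length u" "first_index u i < first_index u j" for i j
    using that card_set_take_less[OF that(3) _ nth_first_index_notin_take] first_index_le[of u j]
    by (simp add: shape_eq_map_first_label first_label_nth)
  show "u ! i = u ! j"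
    using less[OF assms] less[OF assms(2,1)] eq first_index_eq_iff[of u i j]
    by (metis less_irrefl linorder_neqE_nat)
qed (simp add: assms shape_eq_map_first_label)

lemma card_image_eq_if_same_fibres:
  assumes "\<And>k k'. k \<in> S \<Longrightarrow> k' \<in> S \<Longrightarrow> f k = f k' \<longleftrightarrow> g k = g k'"
  shows "card (f ` S) = card (g ` S)"
proof -
  let ?h = "\<lambda>k. (f k, g k)"
  have "inj_on fst (?h ` S)" "inj_on snd (?h ` S)"
    using assms by (auto simp: inj_on_def)
  then have "card (fst ` ?h ` S) = card (snd ` ?h ` S)"
    by (simp add: card_image)
  then show ?thesis by (simp add: image_image)
qed

definition same_pattern :: "'a list \<Rightarrow> 'b list \<Rightarrow> bool" where
  "same_pattern u w \<longleftrightarrow> length u = length w \<and>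
     (\<forall>i<length u. \<forall>j<length u. u ! i = u ! j \<longleftrightarrow> w ! i = w ! j)"

lemma same_pattern_shape: "same_pattern u (shape u)"
  by (simp add: same_pattern_def shape_nth_eq_iff)

lemma same_pattern_sym: "same_pattern u w \<Longrightarrow> same_pattern w u"
  by (auto simp: same_pattern_def)

lemma same_pattern_nth_eq_iff:
  "same_pattern u w \<Longrightarrow> i < length u \<Longrightarrow> j < length u \<Longrightarrow> u ! i = u ! j \<longleftrightarrow> w ! i = w ! j"
  by (simp add: same_pattern_def)

lemma card_set_same_pattern:
  assumes "same_pattern u w"
  shows "card (set u) = card (set w)"
proof -
  have set_eq: "set xs = (!) xs ` {..<length xs}" for xs :: "'c list"
    by (auto simp: in_set_conv_nth)
  have "card ((!) u ` {..<length u}) = card ((!) w ` {..<length u})"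
    using assms by (intro card_image_eq_if_same_fibres) (simp add: same_pattern_def)
  then show ?thesis
    using assms by (simp add: same_pattern_def set_eq[of u] set_eq[of w])
qed

lemma set_shape: "set (shape u) = {1..card (set u)}"
proof (rule card_subset_eq)
  have "card (set (take (first_index u i) u)) < card (set u)" if "i < length u" for i
  proof -
    have "first_index u i < length u" using first_index_le that by (rule le_less_trans)
    then show ?thesis
      using card_set_take_less[OF _ order.refl nth_first_index_notin_take] by simp
  qed
  then show "set (shape u) \<subseteq> {1..card (set u)}"
    by (auto simp: shape_eq_map_first_label in_set_conv_nth first_label_nth Suc_le_eq)
  show "card (set (shape u)) = card {1..card (set u)}"
    using card_set_same_pattern[OF same_pattern_shape] by simp
qed simp

lemma m_shape_shape: "u \<noteq> [] \<Longrightarrow> m_shape (shape u) = card (set u)"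
  unfolding m_shape_def set_shape by (intro Max_eqI) (auto simp: Suc_le_eq card_gt_0_iff)

lemma cyc_edge_eq_iff_same_pattern:
  assumes "same_pattern u w" "k < length u" "k' < length u"
  shows "cyc_edge u k = cyc_edge u k' \<longleftrightarrow> cyc_edge w k = cyc_edge w k'"
proof -
  have len: "length w = length u" using assms(1) by (simp add: same_pattern_def)
  have pat: "u ! i = u ! j \<longleftrightarrow> w ! i = w ! j" if "i < length u" "j < length u" for i j
    using assms(1) that by (rule same_pattern_nth_eq_iff)
  have succ: "(k + 1) mod length u < length u" "(k' + 1) mod length u < length u"
    using assms(2) by (auto intro: mod_less_divisor)
  show ?thesis
    unfolding cyc_edge_def doubleton_eq_iff len
    by (simp only: pat[OF assms(2,3)] pat[OF assms(2) succ(2)] pat[OF succ(1) assms(3)] pat[OF succ])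
qed

lemma edge_visits_same_pattern:
  assumes "same_pattern u w" "k < length u"
  shows "edge_visits u (cyc_edge u k) = edge_visits w (cyc_edge w k)"
proof -
  have "length w = length u" using assms by (simp add: same_pattern_def)
  then have "{k'. k' < length u \<and> cyc_edge u k' = cyc_edge u k}
      = {k'. k' < length w \<and> cyc_edge w k' = cyc_edge w k}"
    using cyc_edge_eq_iff_same_pattern[OF assms(1) _ assms(2)] by auto
  then show ?thesis by (simp add: edge_visits_def)
qed

lemma even_cycle_iff_edge_visits:
  "even_cycle u \<longleftrightarrow> (\<forall>k<length u. even (edge_visits u (cyc_edge u k)))"
  by (auto simp: even_cycle_def cyc_edges_def)

lemma even_cycle_same_pattern:
  assumes "same_pattern u w"
  shows "even_cycle u \<longleftrightarrow> even_cycle w"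
proof -
  have "length w = length u" using assms by (simp add: same_pattern_def)
  then show ?thesis
    unfolding even_cycle_iff_edge_visits using edge_visits_same_pattern[OF assms] by auto
qed

lemma n_visits_eq_card_image:
  "n_visits i u = card (cyc_edge u ` {k. k < length u \<and> edge_visits u (cyc_edge u k) = i})"
  unfolding n_visits_def cyc_edges_def by (rule arg_cong[where f = card]) blast

lemma n_visits_same_pattern:
  assumes "same_pattern u w"
  shows "n_visits i u = n_visits i w"
proof -
  have len: "length w = length u" using assms by (simp add: same_pattern_def)
  let ?K = "{k. k < length u \<and> edge_visits u (cyc_edge u k) = i}"
  have "?K = {k. k < length w \<and> edge_visits w (cyc_edge w k) = i}"
    using edge_visits_same_pattern[OF assms] len by auto
  moreover have "card (cyc_edge u ` ?K) = card (cyc_edge w ` ?K)"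
    using cyc_edge_eq_iff_same_pattern[OF assms] by (intro card_image_eq_if_same_fibres) auto
  ultimately show ?thesis by (simp add: n_visits_eq_card_image)
qed

lemma even_cycle_if_same_pattern_shapes_even:
  assumes "s \<in> shapes_even n p" "same_pattern u s"
  shows "even_cycle u"
proof -
  obtain w where "even_cycle w" "s = shape w"
    using assms(1) by (auto simp: shapes_even_def)
  then show ?thesis
    using assms(2) same_pattern_shape[of w] even_cycle_same_pattern by metis
qed

section \<open>The trace as a sum of cycle weights\<close>

definition walk_weight :: "(nat \<Rightarrow> nat \<Rightarrow> real) \<Rightarrow> nat list \<Rightarrow> nat \<Rightarrow> real" where
  "walk_weight A w j = (\<Prod>t<length w. A (w ! t) ((w @ [j]) ! Suc t))"

lemma walk_weight_snoc: "walk_weight A (w @ [x]) j = walk_weight A w x * A x j"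
proof -
  have "walk_weight A (w @ [x]) j = (\<Prod>t<length w. A ((w @ [x]) ! t) ((w @ [x, j]) ! Suc t)) * A x j"
    by (simp add: walk_weight_def nth_append)
  also have "(\<Prod>t<length w. A ((w @ [x]) ! t) ((w @ [x, j]) ! Suc t)) = walk_weight A w x"
    unfolding walk_weight_def by (rule prod.cong) (auto simp: nth_append)
  finally show ?thesis .
qed

lemma cycle_weight_eq_walk_weight: "u \<noteq> [] \<Longrightarrow> cycle_weight A u = walk_weight A u (u ! 0)"
  unfolding cycle_weight_def walk_weight_def
  by (intro prod.cong) (auto simp: nth_append mod_Suc)

lemma lists_length_Suc_eq_snoc:
  "{xs. set xs \<subseteq> S \<and> length xs = Suc k} = (\<lambda>(xs, x). xs @ [x]) ` ({xs. set xs \<subseteq> S \<and> length xs = k} \<times> S)"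
proof -
  have "xs \<in> (\<lambda>(xs, x). xs @ [x]) ` ({xs. set xs \<subseteq> S \<and> length xs = k} \<times> S)"
    if "set xs \<subseteq> S" "length xs = Suc k" for xs
    using that by (cases xs rule: rev_cases) auto
  then show ?thesis by auto
qed

lemma mat_pow_Suc_eq_sum_walks:
  assumes "i \<in> {1..n}"
  shows "mat_pow n A (Suc k) i j = (\<Sum>w | set w \<subseteq> {1..n} \<and> length w = k. walk_weight A (i # w) j)"
proof (induction k arbitrary: j)
  case 0
  have "(if i = x then 1 else 0) * A x j = (if i = x then A x j else 0)" for x
    by simp
  moreover have "{w. set w \<subseteq> {1..n} \<and> length w = 0} = {[]}"
    by auto
  ultimately show ?case
    using assms by (simp add: mat_mult_def walk_weight_def sum.delta' del: length_0_conv)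
next
  case (Suc k)
  let ?W = "\<lambda>k. {w. set w \<subseteq> {1..n} \<and> length w = k}"
  have "mat_pow n A (Suc (Suc k)) i j = (\<Sum>x\<in>{1..n}. mat_pow n A (Suc k) i x * A x j)"
    by (simp only: mat_pow.simps(2) mat_mult_def)
  also have "\<dots> = (\<Sum>x\<in>{1..n}. \<Sum>w\<in>?W k. walk_weight A (i # w) x * A x j)"
    by (simp add: Suc.IH sum_distrib_right del: mat_pow.simps)
  also have "\<dots> = (\<Sum>(w, x)\<in>?W k \<times> {1..n}. walk_weight A (i # w @ [x]) j)"
    by (subst sum.swap) (simp add: sum.cartesian_product walk_weight_snoc[of A "i # w" for w, simplified])
  also have "\<dots> = (\<Sum>w\<in>?W (Suc k). walk_weight A (i # w) j)"
    unfolding lists_length_Suc_eq_snoc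
    by (subst sum.reindex) (auto simp: inj_on_def case_prod_beta)
  finally show ?case .
qed

lemma mat_trace_mat_pow_eq_sum_cycles:
  assumes "L > 0"
  shows "mat_trace n (mat_pow n A L) = (\<Sum>u | set u \<subseteq> {1..n} \<and> length u = L. cycle_weight A u)"
proof -
  obtain k where L: "L = Suc k" using assms gr0_conv_Suc by blast
  let ?W = "{w. set w \<subseteq> {1..n} \<and> length w = k}"
  have "mat_trace n (mat_pow n A L) = (\<Sum>i\<in>{1..n}. \<Sum>w\<in>?W. cycle_weight A (i # w))"
    unfolding mat_trace_def L
    by (intro sum.cong refl) (simp add: mat_pow_Suc_eq_sum_walks cycle_weight_eq_walk_weight del: mat_pow.simps)
  also have "\<dots> = (\<Sum>(w, i)\<in>?W \<times> {1..n}. cycle_weight A (i # w))"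
    by (subst sum.swap) (simp add: sum.cartesian_product)
  also have "\<dots> = (\<Sum>u | set u \<subseteq> {1..n} \<and> length u = L. cycle_weight A u)"
    unfolding L lists_length_Suc_eq
    by (subst sum.reindex) (auto simp: inj_on_def case_prod_beta)
  finally show ?thesis .
qed

section \<open>Cycles of a fixed shape\<close>

lemma sum_PiE_insert:
  assumes "k \<notin> N"
  shows "(\<Sum>f\<in>Pi\<^sub>E (insert k N) B. F f) = (\<Sum>x\<in>B k. \<Sum>g\<in>Pi\<^sub>E N B. F (g(k := x)))"
  unfolding PiE_insert_eq sum.cartesian_product
  by (subst sum.reindex[OF inj_combinator[OF assms]]) (simp add: case_prod_beta)

text \<open>Summing out the largest vertex of the tree, which is a leaf, costs one row sum.\<close>

lemma tree_weight_sum_le: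
  fixes w :: "'a \<Rightarrow> 'a \<Rightarrow> real" and parent :: "nat \<Rightarrow> nat"
  assumes "finite N" "0 \<notin> N" "\<And>k. k \<in> N \<Longrightarrow> parent k \<in> insert 0 N \<and> parent k < k"
    and "v \<in> A" and w_nonneg: "\<And>x y. x \<in> A \<Longrightarrow> y \<in> A \<Longrightarrow> w x y \<ge> 0"
    and row: "\<And>x. x \<in> A \<Longrightarrow> (\<Sum>y\<in>A. w x y) \<le> c"
  shows "(\<Sum>f\<in>Pi\<^sub>E N (\<lambda>_. A). \<Prod>k\<in>N. w ((f(0 := v)) (parent k)) (f k)) \<le> c ^ card N"
  using assms(1-3)
proof (induction "card N" arbitrary: N)
  case 0
  then show ?case by simp
next
  case (Suc m N)
  define k0 where "k0 = Max N"
  define N' where "N' = N - {k0}"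
  have "N \<noteq> {}" using Suc.hyps(2) by auto
  then have k0: "k0 \<in> N" using Suc.prems(1) by (simp add: k0_def)
  have N: "N = insert k0 N'" "k0 \<notin> N'" "finite N'" "card N' = m"
    using k0 Suc.hyps(2) Suc.prems(1) by (auto simp: N'_def)
  have below: "k < k0" if "k \<in> N'" for k
    using that Suc.prems(1) by (auto simp: N'_def k0_def intro: le_neq_implies_less)
  have parent_N': "parent k \<in> insert 0 N' \<and> parent k < k" if "k \<in> N'" for k
    using Suc.prems(3)[of k] that below[OF that] by (auto simp: N'_def)
  have k0_ne: "k0 \<noteq> 0" "parent k0 \<noteq> k0" "parent k0 \<in> insert 0 N'"
    using k0 Suc.prems(2) Suc.prems(3)[of k0] by (auto simp: N'_def)
  have not_k0: "k \<noteq> k0" "parent k \<noteq> k0" if "k \<in> N'" for k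
    using below parent_N' that by fastforce+
  define T where "T g = (\<Prod>k\<in>N'. w ((g(0 := v)) (parent k)) (g k))" for g
  define r where "r g = (g(0 := v)) (parent k0)" for g
  have in_A: "(g(0 := v)) j \<in> A" if "g \<in> Pi\<^sub>E N' (\<lambda>_. A)" "j \<in> insert 0 N'" for g j
    using that \<open>v \<in> A\<close> by auto
  have T_nonneg: "T g \<ge> 0" if "g \<in> Pi\<^sub>E N' (\<lambda>_. A)" for g
    unfolding T_def using that in_A parent_N' by (fastforce intro!: prod_nonneg w_nonneg)
  have "0 \<le> (\<Sum>y\<in>A. w v y)"
    using w_nonneg[OF \<open>v \<in> A\<close>] by (intro sum_nonneg)
  then have c_nonneg: "c \<ge> 0"
    using row[OF \<open>v \<in> A\<close>] by linarith
  have "(\<Sum>f\<in>Pi\<^sub>E N (\<lambda>_. A). \<Prod>k\<in>N. w ((f(0 := v)) (parent k)) (f k))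
      = (\<Sum>x\<in>A. \<Sum>g\<in>Pi\<^sub>E N' (\<lambda>_. A). T g * w (r g) x)"
  proof -
    have "(\<Prod>k\<in>N. w (((g(k0 := x))(0 := v)) (parent k)) ((g(k0 := x)) k)) = T g * w (r g) x"
      for g x
    proof -
      have "(\<Prod>k\<in>N'. w (((g(k0 := x))(0 := v)) (parent k)) ((g(k0 := x)) k)) = T g"
        unfolding T_def using not_k0 by (intro prod.cong) auto
      moreover have "((g(k0 := x))(0 := v)) (parent k0) = r g"
        using k0_ne by (simp add: r_def)
      ultimately show ?thesis
        using N(1-3) by (simp add: mult.commute)
    qed
    then show ?thesis
      unfolding N(1) sum_PiE_insert[OF N(2)] by (simp only: N(1)[symmetric])
  qed
  also have "\<dots> = (\<Sum>g\<in>Pi\<^sub>E N' (\<lambda>_. A). T g * (\<Sum>x\<in>A. w (r g) x))"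
    by (subst sum.swap) (simp add: sum_distrib_left)
  also have "\<dots> \<le> (\<Sum>g\<in>Pi\<^sub>E N' (\<lambda>_. A). T g * c)"
    using T_nonneg in_A k0_ne(3) by (intro sum_mono mult_left_mono row) (auto simp: r_def)
  also have "\<dots> = c * (\<Sum>g\<in>Pi\<^sub>E N' (\<lambda>_. A). T g)"
    by (simp add: sum_distrib_left mult.commute)
  also have "\<dots> \<le> c * c ^ m"
    using Suc.hyps(1)[OF N(4)[symmetric] N(3)] Suc.prems(2) parent_N' N(1,4) c_nonneg
    by (intro mult_left_mono) (auto simp: T_def)
  finally show ?case using Suc.hyps(2)[symmetric] by simp
qed

lemma abs_prod_le_prod_square_if_paired:
  fixes a :: "'i \<Rightarrow> real"
  assumes "finite I" "K \<subseteq> I" "inj_on \<pi> K" "\<pi> ` K \<subseteq> I - K"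
    and pair: "\<And>t. t \<in> K \<Longrightarrow> \<bar>a (\<pi> t)\<bar> = \<bar>a t\<bar>" and le_1: "\<And>t. t \<in> I \<Longrightarrow> \<bar>a t\<bar> \<le> 1"
  shows "\<bar>\<Prod>t\<in>I. a t\<bar> \<le> (\<Prod>t\<in>K. (a t)\<^sup>2)"
proof -
  let ?J = "K \<union> \<pi> ` K"
  have J: "?J \<subseteq> I" "finite K" using assms(2,4) finite_subset[OF assms(2,1)] by auto
  have "\<bar>\<Prod>t\<in>I. a t\<bar> = (\<Prod>t\<in>?J. \<bar>a t\<bar>) * (\<Prod>t\<in>I - ?J. \<bar>a t\<bar>)"
    using prod.subset_diff[OF J(1) assms(1)] by (simp add: abs_prod mult.commute)
  also have "\<dots> \<le> (\<Prod>t\<in>?J. \<bar>a t\<bar>)"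
    using le_1 by (intro mult_left_le prod_le_1 prod_nonneg) auto
  also have "\<dots> = (\<Prod>t\<in>K. \<bar>a t\<bar>) * (\<Prod>t\<in>\<pi> ` K. \<bar>a t\<bar>)"
    using assms(4) J(2) by (intro prod.union_disjoint) auto
  also have "(\<Prod>t\<in>\<pi> ` K. \<bar>a t\<bar>) = (\<Prod>t\<in>K. \<bar>a t\<bar>)"
    using pair by (simp add: prod.reindex[OF assms(3)])
  finally show ?thesis
    by (simp add: prod.distrib[symmetric] power2_eq_square abs_mult_self_eq)
qed

lemma even_cycle_edge_revisited:
  assumes "even_cycle u" "t < length u"
  shows "\<exists>t'<length u. t' \<noteq> t \<and> cyc_edge u t' = cyc_edge u t"
proof -
  let ?S = "{k. k < length u \<and> cyc_edge u k = cyc_edge u t}"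
  have "t \<in> ?S" using assms(2) by simp
  moreover have "even (card ?S)"
    using assms by (simp add: even_cycle_iff_edge_visits edge_visits_def)
  ultimately have "?S \<noteq> {t}" by auto
  then show ?thesis using \<open>t \<in> ?S\<close> by blast
qed

definition discovery_positions :: "'a list \<Rightarrow> nat set" where
  "discovery_positions s = {k. 0 < k \<and> k < length s \<and> (\<forall>j<k. s ! j \<noteq> s ! k)}"

lemma cyc_edge_discovery_step:
  "k \<in> discovery_positions u \<Longrightarrow> cyc_edge u (k - 1) = {u ! (k - 1), u ! k}"
  by (auto simp: discovery_positions_def cyc_edge_def)

lemma inj_on_cyc_edge_discovery_steps:
  "inj_on (cyc_edge u) ((\<lambda>k. k - 1) ` discovery_positions u)"
proof (rule inj_onI)
  have neq: "cyc_edge u (k - 1) \<noteq> cyc_edge u (k' - 1)"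
    if "k \<in> discovery_positions u" "k' \<in> discovery_positions u" "k < k'" for k k'
  proof -
    have "\<forall>j<k'. u ! j \<noteq> u ! k'" using that(2) by (simp add: discovery_positions_def)
    then have "u ! k' \<notin> {u ! (k - 1), u ! k}"
      using that(3) by (metis diff_le_self insertE le_less_trans singletonD)
    then show ?thesis
      using cyc_edge_discovery_step[OF that(1)] cyc_edge_discovery_step[OF that(2)]
      by auto
  qed
  fix x y
  assume "x \<in> (\<lambda>k. k - 1) ` discovery_positions u" "y \<in> (\<lambda>k. k - 1) ` discovery_positions u"
    and eq: "cyc_edge u x = cyc_edge u y"
  then obtain k k' where "k \<in> discovery_positions u" "k' \<in> discovery_positions u" "x = k - 1" "y = k' - 1"
    by blast
  then show "x = y" using neq[of k k'] neq[of k' k] eq by (metis linorder_neqE_nat)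
qed

text \<open>Every discovery edge is traversed again at a step that is not itself a discovery step;
  all remaining factors have modulus at most 1.\<close>

lemma cycle_weight_le_prod_discovery_steps:
  fixes b :: "nat \<Rightarrow> nat \<Rightarrow> real"
  assumes sym: "\<And>i j. i \<in> V \<Longrightarrow> j \<in> V \<Longrightarrow> b i j = b j i"
    and le_1: "\<And>i j. i \<in> V \<Longrightarrow> j \<in> V \<Longrightarrow> \<bar>b i j\<bar> \<le> 1"
    and u: "set u \<subseteq> V" "even_cycle u"
  shows "cycle_weight b u \<le> (\<Prod>k\<in>discovery_positions u. (b (u ! (k - 1)) (u ! k))\<^sup>2)"
proof -
  let ?L = "length u"
  define a where "a t = b (u ! t) (u ! ((t + 1) mod ?L))" for t
  define K where "K = (\<lambda>k. k - 1) ` discovery_positions u"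
  have in_V: "u ! i \<in> V" "u ! ((i + 1) mod ?L) \<in> V" if "i < ?L" for i
  proof -
    have "(i + 1) mod ?L < ?L" using that by (auto intro: mod_less_divisor)
    then show "u ! i \<in> V" "u ! ((i + 1) mod ?L) \<in> V"
      using u(1) that by (meson nth_mem subsetD)+
  qed
  have K_sub: "K \<subseteq> {..<?L}" by (auto simp: K_def discovery_positions_def)
  have inj_edge: "inj_on (cyc_edge u) K"
    unfolding K_def by (rule inj_on_cyc_edge_discovery_steps)
  have "\<forall>t\<in>K. \<exists>t'. t' < ?L \<and> t' \<noteq> t \<and> cyc_edge u t' = cyc_edge u t"
    using even_cycle_edge_revisited[OF u(2)] K_sub by blast
  then obtain \<pi> where \<pi>: "\<And>t. t \<in> K \<Longrightarrow> \<pi> t < ?L \<and> \<pi> t \<noteq> t \<and> cyc_edge u (\<pi> t) = cyc_edge u t"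
    by metis
  have "inj_on \<pi> K"
    using \<pi> inj_edge by (metis inj_on_def)
  moreover have "\<pi> ` K \<subseteq> {..<?L} - K"
  proof -
    have "\<pi> t \<notin> K" if "t \<in> K" for t
      using \<pi>[OF that] inj_onD[OF inj_edge _ _ that] by blast
    then show ?thesis using \<pi> by auto
  qed
  moreover have "\<bar>a (\<pi> t)\<bar> = \<bar>a t\<bar>" if "t \<in> K" for t
  proof -
    have "{u ! \<pi> t, u ! ((\<pi> t + 1) mod ?L)} = {u ! t, u ! ((t + 1) mod ?L)}"
      using \<pi>[OF that] by (simp add: cyc_edge_def)
    then show ?thesis
      using in_V[of t] sym K_sub that unfolding a_def doubleton_eq_iff by auto
  qed
  moreover have "\<bar>a t\<bar> \<le> 1" if "t \<in> {..<?L}" for t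
    using that in_V le_1 by (simp add: a_def)
  ultimately have "\<bar>\<Prod>t<?L. a t\<bar> \<le> (\<Prod>t\<in>K. (a t)\<^sup>2)"
    using K_sub by (intro abs_prod_le_prod_square_if_paired[where \<pi> = \<pi>]) auto
  also have "(\<Prod>t\<in>K. (a t)\<^sup>2) = (\<Prod>k\<in>discovery_positions u. (b (u ! (k - 1)) (u ! k))\<^sup>2)"
    unfolding K_def
    by (subst prod.reindex) (auto simp: inj_on_def discovery_positions_def a_def intro!: prod.cong)
  finally show ?thesis
    unfolding cycle_weight_def a_def by linarith
qed

text \<open>The step into discovery position \<open>k\<close> leaves vertex \<open>s ! (k - 1)\<close>, which was first
  visited at \<open>discovery_parent s k\<close>; so the discovery positions form a tree rooted at 0.\<close>

definition discovery_parent :: "'a list \<Rightarrow> nat \<Rightarrow> nat" where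
  "discovery_parent s k = first_index s (k - 1)"

lemma first_index_mem_discovery_positions:
  "i < length s \<Longrightarrow> first_index s i \<in> insert 0 (discovery_positions s)"
  using first_index_le[of s i]
  by (auto simp: discovery_positions_def first_index_nth dest: nth_before_first_index)

lemma discovery_parent_props:
  assumes "k \<in> discovery_positions s"
  shows "discovery_parent s k \<in> insert 0 (discovery_positions s)" "discovery_parent s k < k"
    "s ! discovery_parent s k = s ! (k - 1)"
  using assms first_index_le[of s "k - 1"] first_index_mem_discovery_positions[of "k - 1" s]
  by (auto simp: discovery_parent_def discovery_positions_def first_index_nth)

lemma card_discovery_positions:
  assumes "s \<noteq> []"
  shows "card (discovery_positions s) = card (set s) - 1"
proof -
  have "bij_betw ((!) s) (insert 0 (discovery_positions s)) (set s)"
  proof (rule bij_betw_imageI)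
    have new: "s ! k \<noteq> s ! k'" if "k' \<in> discovery_positions s" "k < k'" for k k'
      using that by (auto simp: discovery_positions_def)
    show "inj_on ((!) s) (insert 0 (discovery_positions s))"
    proof (rule inj_onI, rule ccontr)
      fix k k' assume k: "k \<in> insert 0 (discovery_positions s)" "k' \<in> insert 0 (discovery_positions s)"
        and eq: "s ! k = s ! k'" and "k \<noteq> k'"
      then consider "k < k'" | "k' < k" by linarith
      then show False
        using k eq new[of k' k] new[of k k'] by cases auto
    qed
    have "s ! i \<in> (!) s ` insert 0 (discovery_positions s)" if "i < length s" for i
      using first_index_mem_discovery_positions[OF that] first_index_nth[of s i] by (metis imageI)
    then show "(!) s ` insert 0 (discovery_positions s) = set s"
      using assms by (fastforce simp: in_set_conv_nth discovery_positions_def)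
  qed
  then show ?thesis
    by (simp add: bij_betw_same_card[symmetric] discovery_positions_def)
qed

lemma card_discovery_positions_shape:
  assumes "u \<noteq> []"
  shows "card (discovery_positions (shape u)) = m_shape (shape u) - 1"
proof -
  have "shape u \<noteq> []" using assms by (metis length_0_conv length_shape)
  then show ?thesis
    using assms by (simp add: card_discovery_positions m_shape_shape set_shape)
qed

lemma discovery_positions_same_pattern: "same_pattern u s \<Longrightarrow> discovery_positions u = discovery_positions s"
  by (auto simp: same_pattern_def discovery_positions_def)

lemma same_pattern_eq_if_agree_on_discovery_positions:
  assumes "same_pattern u s" "same_pattern u' s" "u ! 0 = u' ! 0"
    and agree: "\<And>k. k \<in> discovery_positions s \<Longrightarrow> u ! k = u' ! k"
  shows "u = u'"
proof (rule nth_equalityI)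
  show len: "length u = length u'" using assms(1,2) by (simp add: same_pattern_def)
  fix i
  assume "i < length u"
  then have i: "i < length s" using assms(1) by (simp add: same_pattern_def)
  let ?j = "first_index s i"
  have j: "?j < length s" "s ! ?j = s ! i"
    using first_index_le[of s i] i by (auto simp: first_index_nth)
  have "u ! ?j = u' ! ?j"
    using first_index_mem_discovery_positions[OF i] agree assms(3) by auto
  moreover have "u ! ?j = u ! i" "u' ! ?j = u' ! i"
    using same_pattern_nth_eq_iff[OF same_pattern_sym[OF assms(1)] j(1) i]
      same_pattern_nth_eq_iff[OF same_pattern_sym[OF assms(2)] j(1) i] j(2) by simp_all
  ultimately show "u ! i = u' ! i" by simp
qed

lemma cycle_weight_le_tree_product:
  fixes b :: "nat \<Rightarrow> nat \<Rightarrow> real"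
  assumes sym: "\<And>i j. i \<in> V \<Longrightarrow> j \<in> V \<Longrightarrow> b i j = b j i"
    and le_1: "\<And>i j. i \<in> V \<Longrightarrow> j \<in> V \<Longrightarrow> \<bar>b i j\<bar> \<le> 1"
    and u: "set u \<subseteq> V" "even_cycle u" "same_pattern u s"
  shows "cycle_weight b u \<le> (\<Prod>k\<in>discovery_positions s. (b (u ! discovery_parent s k) (u ! k))\<^sup>2)"
proof -
  have "u ! discovery_parent s k = u ! (k - 1)" if "k \<in> discovery_positions s" for k
  proof -
    have "discovery_parent s k < length u" "k - 1 < length u"
      using discovery_parent_props(2)[OF that] that u(3)
      by (auto simp: discovery_positions_def same_pattern_def)
    then show ?thesis
      using same_pattern_nth_eq_iff[OF u(3)] discovery_parent_props(3)[OF that] by blast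
  qed
  then have "(\<Prod>k\<in>discovery_positions u. (b (u ! (k - 1)) (u ! k))\<^sup>2)
      = (\<Prod>k\<in>discovery_positions s. (b (u ! discovery_parent s k) (u ! k))\<^sup>2)"
    unfolding discovery_positions_same_pattern[OF u(3)] by (intro prod.cong) auto
  then show ?thesis
    using cycle_weight_le_prod_discovery_steps[where V = V and b = b, OF sym le_1 u(1,2)] by simp
qed

lemma inj_on_restrict_discovery_positions:
  "inj_on (\<lambda>u. restrict ((!) u) (discovery_positions s)) {u. same_pattern u s \<and> u ! 0 = v}"
proof (rule inj_onI)
  fix u u'
  assume "u \<in> {u. same_pattern u s \<and> u ! 0 = v}" "u' \<in> {u. same_pattern u s \<and> u ! 0 = v}"
    and eq: "restrict ((!) u) (discovery_positions s) = restrict ((!) u') (discovery_positions s)"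
  moreover have "u ! k = u' ! k" if "k \<in> discovery_positions s" for k
    using fun_cong[OF eq, of k] that by simp
  ultimately show "u = u'"
    by (intro same_pattern_eq_if_agree_on_discovery_positions) auto
qed

lemma sum_Gamma_cycle_weight_le:
  fixes b :: "nat \<Rightarrow> nat \<Rightarrow> real"
  assumes sym: "\<And>i j. i \<in> {1..n} \<Longrightarrow> j \<in> {1..n} \<Longrightarrow> b i j = b j i"
    and le_1: "\<And>i j. i \<in> {1..n} \<Longrightarrow> j \<in> {1..n} \<Longrightarrow> \<bar>b i j\<bar> \<le> 1"
    and row: "\<And>i. i \<in> {1..n} \<Longrightarrow> (\<Sum>j\<in>{1..n}. (b i j)\<^sup>2) \<le> c"
    and "v \<in> {1..n}" "s \<in> shapes_even n p" "p > 0"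
  shows "(\<Sum>u\<in>Gamma n p s v. cycle_weight b u) \<le> c ^ (m_shape s - 1)"
proof -
  let ?N = "discovery_positions s"
  obtain w where w: "w \<in> cycles n p" "s = shape w"
    using assms(5) by (auto simp: shapes_even_def)
  then have "w \<noteq> []" using \<open>p > 0\<close> by (auto simp: cycles_def)
  then have card_N: "card ?N = m_shape s - 1"
    using w(2) by (simp add: card_discovery_positions_shape)
  have finite_N: "finite ?N" and zero_N: "0 \<notin> ?N" by (simp_all add: discovery_positions_def)
  have mem_Gamma: "same_pattern u s" "set u \<subseteq> {1..n}" "u ! 0 = v" "even_cycle u"
    if "u \<in> Gamma n p s v" for u
    using that same_pattern_shape[of u] assms(5) even_cycle_if_same_pattern_shapes_even
    by (auto simp: Gamma_def cycles_def)
  define r where "r u = restrict ((!) u) ?N" for u :: "nat list"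
  define G where "G f = (\<Prod>k\<in>?N. (b ((f(0 := v)) (discovery_parent s k)) (f k))\<^sup>2)" for f
  have "cycle_weight b u \<le> G (r u)" if "u \<in> Gamma n p s v" for u
  proof -
    have "((r u)(0 := v)) (discovery_parent s k) = u ! discovery_parent s k" if "k \<in> ?N" for k
      using discovery_parent_props(1)[OF that] zero_N mem_Gamma(3)[OF \<open>u \<in> Gamma n p s v\<close>]
      by (auto simp: r_def)
    then have "G (r u) = (\<Prod>k\<in>?N. (b (u ! discovery_parent s k) (u ! k))\<^sup>2)"
      unfolding G_def by (intro prod.cong) (auto simp: r_def)
    then show ?thesis
      using cycle_weight_le_tree_product[where V = "{1..n}" and b = b, OF sym le_1]
        mem_Gamma(2,4,1)[OF that] by simp
  qed
  then have "(\<Sum>u\<in>Gamma n p s v. cycle_weight b u) \<le> (\<Sum>u\<in>Gamma n p s v. G (r u))"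
    by (rule sum_mono)
  also have "\<dots> = (\<Sum>f\<in>r ` Gamma n p s v. G f)"
  proof -
    have "Gamma n p s v \<subseteq> {u. same_pattern u s \<and> u ! 0 = v}" using mem_Gamma by blast
    then have "inj_on r (Gamma n p s v)"
      unfolding r_def using inj_on_restrict_discovery_positions by (rule inj_on_subset[rotated])
    then show ?thesis by (simp add: sum.reindex)
  qed
  also have "\<dots> \<le> (\<Sum>f\<in>Pi\<^sub>E ?N (\<lambda>_. {1..n}). G f)"
  proof (rule sum_mono2)
    have "u ! k \<in> {1..n}" if "u \<in> Gamma n p s v" "k \<in> ?N" for u k
    proof -
      have "k < length u"
        using mem_Gamma[OF that(1)] that(2) by (auto simp: discovery_positions_def same_pattern_def)
      then show ?thesis using mem_Gamma[OF that(1)] nth_mem by blast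
    qed
    then show "r ` Gamma n p s v \<subseteq> Pi\<^sub>E ?N (\<lambda>_. {1..n})"
      by (auto simp: r_def)
  qed (auto simp: finite_N finite_PiE G_def intro: prod_nonneg)
  also have "\<dots> \<le> c ^ card ?N"
    unfolding G_def using finite_N zero_N discovery_parent_props(1,2) \<open>v \<in> {1..n}\<close> row
    by (intro tree_weight_sum_le[where w = "\<lambda>x y. (b x y)\<^sup>2"]) auto
  finally show ?thesis by (simp only: card_N)
qed

section \<open>Gaussian moments\<close>

abbreviation std_normal_moment :: "nat \<Rightarrow> real" where
  "std_normal_moment i \<equiv> \<integral>x. x ^ i \<partial>std_normal_distribution"

definition moment_weight :: "nat \<Rightarrow> nat list \<Rightarrow> real" where
  "moment_weight L u = (\<Prod>i\<in>{1..L}. std_normal_moment i ^ n_visits i u)"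

lemma product_sigma_finite_std_normal:
  "product_sigma_finite (\<lambda>_ :: 'i. std_normal_distribution)"
  unfolding product_sigma_finite_def
  using prob_space_imp_sigma_finite[OF prob_space_normal_density] by simp

lemma finite_lower_idx: "finite (lower_idx n)"
  by (rule finite_subset[of _ "{0..n} \<times> {0..n}"]) (auto simp: lower_idx_def)

text \<open>The index \<open>(i, j)\<close>, \<open>i \<ge> j\<close>, of the Gaussian \<open>g\<close> carried by the \<open>k\<close>-th edge.\<close>

definition lower_index :: "nat list \<Rightarrow> nat \<Rightarrow> nat \<times> nat" where
  "lower_index u k = (max (u ! k) (u ! ((k + 1) mod length u)), min (u ! k) (u ! ((k + 1) mod length u)))"

definition edge_count :: "nat list \<Rightarrow> nat \<times> nat \<Rightarrow> nat" where
  "edge_count u ij = card {k. k < length u \<and> lower_index u k = ij}"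

lemma lower_index_eq_iff: "lower_index u k = lower_index u k' \<longleftrightarrow> cyc_edge u k = cyc_edge u k'"
  unfolding lower_index_def cyc_edge_def by (auto simp: doubleton_eq_iff max_def min_def)

lemma edge_count_lower_index: "edge_count u (lower_index u k) = edge_visits u (cyc_edge u k)"
  unfolding edge_count_def edge_visits_def lower_index_eq_iff ..

lemma lower_index_mem_lower_idx:
  assumes "set u \<subseteq> {1..n}" "k < length u"
  shows "lower_index u k \<in> lower_idx n"
proof -
  have "(k + 1) mod length u < length u" using assms(2) by (auto intro: mod_less_divisor)
  then have "u ! k \<in> {1..n}" "u ! ((k + 1) mod length u) \<in> {1..n}"
    using assms by (meson nth_mem subsetD)+
  then show ?thesis by (auto simp: lower_index_def lower_idx_def)
qed

lemma cycle_weight_gauss_mat: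
  assumes sym: "\<And>i j. i \<in> {1..n} \<Longrightarrow> j \<in> {1..n} \<Longrightarrow> b i j = b j i"
    and u: "set u \<subseteq> {1..n}"
  shows "cycle_weight (gauss_mat b g) u = cycle_weight b u * (\<Prod>ij\<in>lower_idx n. g ij ^ edge_count u ij)"
proof -
  let ?L = "length u"
  have "gauss_mat b g (u ! k) (u ! ((k + 1) mod ?L)) = g (lower_index u k) * b (u ! k) (u ! ((k + 1) mod ?L))"
    if "k < ?L" for k
  proof -
    have "(k + 1) mod ?L < ?L" using that by (auto intro: mod_less_divisor)
    then have "b (u ! k) (u ! ((k + 1) mod ?L)) = b (u ! ((k + 1) mod ?L)) (u ! k)"
      using u that by (intro sym) (meson nth_mem subsetD)+
    then show ?thesis by (auto simp: gauss_mat_def lower_index_def max_def min_def)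
  qed
  then have "cycle_weight (gauss_mat b g) u = (\<Prod>k<?L. g (lower_index u k)) * cycle_weight b u"
    by (simp add: cycle_weight_def prod.distrib)
  also have "(\<Prod>k<?L. g (lower_index u k))
      = (\<Prod>ij\<in>lower_idx n. \<Prod>k\<in>{k \<in> {..<?L}. lower_index u k = ij}. g (lower_index u k))"
    using finite_lower_idx lower_index_mem_lower_idx[OF u] by (intro prod.group[symmetric]) auto
  also have "\<dots> = (\<Prod>ij\<in>lower_idx n. g ij ^ edge_count u ij)"
    by (intro prod.cong refl) (simp add: edge_count_def)
  finally show ?thesis by (simp add: mult.commute)
qed

lemma expectation_cycle_weight_gauss_mat:
  assumes sym: "\<And>i j. i \<in> {1..n} \<Longrightarrow> j \<in> {1..n} \<Longrightarrow> b i j = b j i"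
    and u: "set u \<subseteq> {1..n}"
  defines "M \<equiv> \<Pi>\<^sub>M ij\<in>lower_idx n. std_normal_distribution"
  shows "integrable M (\<lambda>g. cycle_weight (gauss_mat b g) u)"
    and "(\<integral>g. cycle_weight (gauss_mat b g) u \<partial>M)
       = cycle_weight b u * (\<Prod>ij\<in>lower_idx n. std_normal_moment (edge_count u ij))"
proof -
  have eq: "(\<lambda>g. cycle_weight (gauss_mat b g) u)
      = (\<lambda>g. cycle_weight b u * (\<Prod>ij\<in>lower_idx n. g ij ^ edge_count u ij))"
    using cycle_weight_gauss_mat[OF sym u] by simp
  note product = product_sigma_finite_std_normal finite_lower_idx integrable_std_normal_distribution_moment
  have "integrable M (\<lambda>g. \<Prod>ij\<in>lower_idx n. g ij ^ edge_count u ij)"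
    unfolding M_def by (rule product_sigma_finite.product_integrable_prod[OF product])
  then show "integrable M (\<lambda>g. cycle_weight (gauss_mat b g) u)"
    unfolding eq by (rule integrable_mult_right)
  have "(\<integral>g. (\<Prod>ij\<in>lower_idx n. g ij ^ edge_count u ij) \<partial>M)
      = (\<Prod>ij\<in>lower_idx n. std_normal_moment (edge_count u ij))"
    unfolding M_def by (rule product_sigma_finite.product_integral_prod[OF product])
  then show "(\<integral>g. cycle_weight (gauss_mat b g) u \<partial>M)
      = cycle_weight b u * (\<Prod>ij\<in>lower_idx n. std_normal_moment (edge_count u ij))"
    unfolding eq by simp
qed

lemma std_normal_moment_0: "std_normal_moment 0 = 1"
  using prob_space.prob_space[OF prob_space_normal_density] by simp

lemma edge_count_pos:
  assumes "k < length u"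
  shows "edge_count u (lower_index u k) \<in> {1..length u}"
proof -
  let ?S = "{k'. k' < length u \<and> lower_index u k' = lower_index u k}"
  have "k \<in> ?S" "?S \<subseteq> {..<length u}" using assms by auto
  then have "0 < card ?S" "card ?S \<le> length u"
    using finite_subset[OF _ finite_lessThan] card_mono[OF finite_lessThan]
    by (fastforce simp: card_gt_0_iff)+
  then show ?thesis by (simp add: edge_count_def)
qed

lemma prod_moment_edge_count:
  assumes "set u \<subseteq> {1..n}"
  shows "(\<Prod>ij\<in>lower_idx n. std_normal_moment (edge_count u ij)) = moment_weight (length u) u"
proof -
  let ?L = "length u"
  let ?J = "lower_index u ` {..<?L}"
  have J: "?J \<subseteq> lower_idx n" using lower_index_mem_lower_idx[OF assms] by auto
  have "std_normal_moment (edge_count u ij) = 1" if "ij \<notin> ?J" for ij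
  proof -
    have "edge_count u ij = 0" using that by (auto simp: edge_count_def)
    then show ?thesis by (simp only: std_normal_moment_0)
  qed
  then have "(\<Prod>ij\<in>lower_idx n. std_normal_moment (edge_count u ij))
      = (\<Prod>ij\<in>?J. std_normal_moment (edge_count u ij))"
    by (intro prod.mono_neutral_right[OF finite_lower_idx J]) blast
  also have "\<dots> = (\<Prod>i\<in>{1..?L}. \<Prod>ij | ij \<in> ?J \<and> edge_count u ij = i. std_normal_moment (edge_count u ij))"
  proof (rule prod.group[symmetric])
    show "edge_count u ` ?J \<subseteq> {1..?L}" using edge_count_pos by blast
  qed simp_all
  also have "\<dots> = moment_weight ?L u"
    unfolding moment_weight_def
  proof (intro prod.cong refl)
    fix i
    let ?E = "{ij. ij \<in> ?J \<and> edge_count u ij = i}"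
    have "?E = lower_index u ` {k. k < ?L \<and> edge_visits u (cyc_edge u k) = i}"
      by (auto simp: edge_count_lower_index)
    then have "card ?E = n_visits i u"
      unfolding n_visits_eq_card_image
      by (simp only:) (intro card_image_eq_if_same_fibres lower_index_eq_iff)
    moreover have "(\<Prod>ij\<in>?E. std_normal_moment (edge_count u ij)) = (\<Prod>ij\<in>?E. std_normal_moment i)"
      by (rule prod.cong) auto
    ultimately show "(\<Prod>ij\<in>?E. std_normal_moment (edge_count u ij)) = std_normal_moment i ^ n_visits i u"
      by simp
  qed
  finally show ?thesis .
qed

lemma edge_visits_le_length: "edge_visits u e \<le> length u"
  unfolding edge_visits_def by (rule card_mono[of "{..<length u}", simplified]) auto

lemma moment_weight_eq_0_if_not_even:
  assumes "\<not> even_cycle u"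
  shows "moment_weight (length u) u = 0"
proof -
  obtain k where k: "k < length u" "odd (edge_visits u (cyc_edge u k))"
    using assms by (auto simp: even_cycle_iff_edge_visits)
  let ?i = "edge_visits u (cyc_edge u k)"
  have "cyc_edge u k \<in> cyc_edge u ` {k. k < length u \<and> edge_visits u (cyc_edge u k) = ?i}"
    using k(1) by blast
  then have "n_visits ?i u \<noteq> 0"
    unfolding n_visits_eq_card_image by (subst card_0_eq) auto
  moreover have "std_normal_moment ?i = 0"
    using k(2) by (rule integral_std_normal_distribution_moment_odd)
  ultimately have "std_normal_moment ?i ^ n_visits ?i u = 0" by simp
  moreover have "?i \<in> {1..length u}"
    using odd_pos[OF k(2)] edge_visits_le_length[of u] by simp
  ultimately show ?thesis
    unfolding moment_weight_def by (intro prod_zero[OF finite_atLeastAtMost] bexI)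
qed

lemma moment_weight_nonneg:
  assumes "even_cycle s"
  shows "moment_weight L s \<ge> 0"
  unfolding moment_weight_def
proof (intro prod_nonneg)
  fix i
  show "std_normal_moment i ^ n_visits i s \<ge> 0"
  proof (cases "even i")
    case True
    then show ?thesis by (simp add: integral_nonneg_AE zero_le_even_power)
  next
    case False
    then have "{e \<in> cyc_edges s. edge_visits s e = i} = {}"
      using assms by (auto simp: even_cycle_def)
    then have "n_visits i s = 0" unfolding n_visits_def by (metis card.empty)
    then show ?thesis by simp
  qed
qed

lemma even_cycle_if_shapes_even: "s \<in> shapes_even n p \<Longrightarrow> even_cycle s"
  by (rule even_cycle_if_same_pattern_shapes_even) (auto simp: same_pattern_def)

lemma cycles_eq: "cycles n p = {u. set u \<subseteq> {1..n} \<and> length u = 2 * p}"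
  by (auto simp: cycles_def)

lemma finite_cycles: "finite (cycles n p)"
  by (simp add: cycles_eq finite_lists_length_eq)

lemma expected_trace_gauss_mat:
  assumes sym: "\<And>i j. i \<in> {1..n} \<Longrightarrow> j \<in> {1..n} \<Longrightarrow> b i j = b j i" and "p > 0"
  shows "(\<integral>g. mat_trace n (mat_pow n (gauss_mat b g) (2 * p)) \<partial>(\<Pi>\<^sub>M ij\<in>lower_idx n. std_normal_distribution))
      = (\<Sum>u | u \<in> cycles n p \<and> even_cycle u. cycle_weight b u * moment_weight (2 * p) (shape u))"
    (is "?E = _")
proof -
  let ?M = "\<Pi>\<^sub>M ij\<in>lower_idx n. std_normal_distribution"
  have in_cycles: "set u \<subseteq> {1..n}" "length u = 2 * p" if "u \<in> cycles n p" for u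
    using that by (simp_all add: cycles_def)
  have expectation:
    "integrable ?M (\<lambda>g. cycle_weight (gauss_mat b g) u)"
    "(\<integral>g. cycle_weight (gauss_mat b g) u \<partial>?M) = cycle_weight b u * moment_weight (2 * p) u"
    if "u \<in> cycles n p" for u
    using expectation_cycle_weight_gauss_mat[where b = b and n = n and u = u, OF sym]
      prod_moment_edge_count[of u n] in_cycles[OF that] by simp_all
  have "?E = (\<integral>g. (\<Sum>u\<in>cycles n p. cycle_weight (gauss_mat b g) u) \<partial>?M)"
    using \<open>p > 0\<close> by (simp add: mat_trace_mat_pow_eq_sum_cycles cycles_eq)
  also have "\<dots> = (\<Sum>u\<in>cycles n p. \<integral>g. cycle_weight (gauss_mat b g) u \<partial>?M)"
    using expectation(1) by simp
  also have "\<dots> = (\<Sum>u\<in>cycles n p. cycle_weight b u * moment_weight (2 * p) u)"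
    using expectation(2) by (rule sum.cong[OF refl])
  also have "\<dots> = (\<Sum>u | u \<in> cycles n p \<and> even_cycle u. cycle_weight b u * moment_weight (2 * p) u)"
  proof (intro sum.mono_neutral_right)
    show "\<forall>u\<in>cycles n p - {u. u \<in> cycles n p \<and> even_cycle u}. cycle_weight b u * moment_weight (2 * p) u = 0"
      using moment_weight_eq_0_if_not_even in_cycles(2) by force
  qed (auto simp: finite_cycles)
  also have "\<dots> = (\<Sum>u | u \<in> cycles n p \<and> even_cycle u. cycle_weight b u * moment_weight (2 * p) (shape u))"
    using n_visits_same_pattern[OF same_pattern_shape] by (simp add: moment_weight_def)
  finally show ?thesis .
qed

lemma sum_even_cycles_by_shape:
  assumes "p > 0"
  shows "(\<Sum>u | u \<in> cycles n p \<and> even_cycle u. f u)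
       = (\<Sum>s\<in>shapes_even n p. \<Sum>v\<in>{1..n}. \<Sum>u\<in>Gamma n p s v. f u)"
proof -
  let ?E = "{u. u \<in> cycles n p \<and> even_cycle u}"
  have "(\<lambda>u. (shape u, u ! 0)) ` ?E \<subseteq> shapes_even n p \<times> {1..n}"
  proof
    fix q assume "q \<in> (\<lambda>u. (shape u, u ! 0)) ` ?E"
    then obtain u where u: "u \<in> ?E" "q = (shape u, u ! 0)" by blast
    then have "u ! 0 \<in> set u" using \<open>p > 0\<close> by (auto simp: cycles_def)
    then show "q \<in> shapes_even n p \<times> {1..n}"
      using u by (auto simp: cycles_def shapes_even_def)
  qed
  then have "(\<Sum>u\<in>?E. f u) = (\<Sum>q\<in>shapes_even n p \<times> {1..n}. \<Sum>u | u \<in> ?E \<and> (shape u, u ! 0) = q. f u)"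
    using finite_cycles by (intro sum.group[symmetric]) (auto simp: shapes_even_def)
  also have "\<dots> = (\<Sum>q\<in>shapes_even n p \<times> {1..n}. \<Sum>u\<in>Gamma n p (fst q) (snd q). f u)"
  proof (intro sum.cong refl)
    fix q assume "q \<in> shapes_even n p \<times> {1..n}"
    then show "{u. u \<in> ?E \<and> (shape u, u ! 0) = q} = Gamma n p (fst q) (snd q)"
      using even_cycle_if_same_pattern_shapes_even same_pattern_shape
      by (auto simp: Gamma_def)
  qed
  finally show ?thesis by (simp add: sum.cartesian_product case_prod_beta)
qed

lemma expected_trace_gauss_mat_le:
  assumes sym: "\<And>i j. i \<in> {1..n} \<Longrightarrow> j \<in> {1..n} \<Longrightarrow> b i j = b j i" and "p > 0"
    and Gamma_le: "\<And>v s. v \<in> {1..n} \<Longrightarrow> s \<in> shapes_even n p \<Longrightarrow> (\<Sum>u\<in>Gamma n p s v. cycle_weight b u) \<le> B s"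
  shows "(\<integral>g. mat_trace n (mat_pow n (gauss_mat b g) (2 * p)) \<partial>(\<Pi>\<^sub>M ij\<in>lower_idx n. std_normal_distribution))
      \<le> real n * (\<Sum>s\<in>shapes_even n p. B s * moment_weight (2 * p) s)"
proof -
  let ?w = "moment_weight (2 * p)"
  have "(\<integral>g. mat_trace n (mat_pow n (gauss_mat b g) (2 * p)) \<partial>(\<Pi>\<^sub>M ij\<in>lower_idx n. std_normal_distribution))
      = (\<Sum>s\<in>shapes_even n p. \<Sum>v\<in>{1..n}. \<Sum>u\<in>Gamma n p s v. cycle_weight b u * ?w (shape u))"
    by (simp only: expected_trace_gauss_mat[OF sym \<open>p > 0\<close>] sum_even_cycles_by_shape[OF \<open>p > 0\<close>])
  also have "\<dots> = (\<Sum>s\<in>shapes_even n p. \<Sum>v\<in>{1..n}. ?w s * (\<Sum>u\<in>Gamma n p s v. cycle_weight b u))"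
    by (intro sum.cong refl) (simp add: Gamma_def sum_distrib_left mult.commute)
  also have "\<dots> \<le> (\<Sum>s\<in>shapes_even n p. \<Sum>v\<in>{1..n}. ?w s * B s)"
    using Gamma_le moment_weight_nonneg[OF even_cycle_if_shapes_even]
    by (intro sum_mono mult_left_mono) auto
  also have "\<dots> = real n * (\<Sum>s\<in>shapes_even n p. B s * ?w s)"
    by (simp add: sum_distrib_left mult.commute)
  finally show ?thesis .
qed

theorem lemma2p5:
  fixes n p :: nat and b :: "nat \<Rightarrow> nat \<Rightarrow> real" and \<sigma> :: real
  assumes "n \<ge> 1" and "p > 0"
    and sym: "\<And>i j. i \<in> {1..n} \<Longrightarrow> j \<in> {1..n} \<Longrightarrow> b i j = b j i"
    and bnd: "Max {\<bar>b i j\<bar> | i j. i \<in> {1..n} \<and> j \<in> {1..n}} \<le> 1"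
    and sigma_def: "\<sigma> = Max ((\<lambda>i. sqrt (\<Sum>j\<in>{1..n}. (b i j)\<^sup>2)) ` {1..n})"
  shows "(\<forall>v \<in> {1..n}. \<forall>s \<in> shapes_even n p.
            (\<Sum>u\<in>Gamma n p s v. cycle_weight b u) \<le> \<sigma> ^ (2 * (m_shape s - 1)))
       \<and> (\<integral>g. mat_trace n (mat_pow n (gauss_mat b g) (2 * p))
               \<partial>(\<Pi>\<^sub>M ij\<in>lower_idx n. std_normal_distribution))
         \<le> real n * (\<Sum>s\<in>shapes_even n p. \<sigma> ^ (2 * (m_shape s - 1)) *
               (\<Prod>i\<in>{1..2 * p}. (\<integral>x. x ^ i \<partial>std_normal_distribution) ^ n_visits i s))"
proof -
  have le_1: "\<bar>b i j\<bar> \<le> 1" if "i \<in> {1..n}" "j \<in> {1..n}" for i j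
  proof -
    have "\<bar>b i j\<bar> \<le> Max {\<bar>b i j\<bar> | i j. i \<in> {1..n} \<and> j \<in> {1..n}}"
      using that by (intro Max_ge finite_image_set2) auto
    then show ?thesis using bnd by linarith
  qed
  have row: "(\<Sum>j\<in>{1..n}. (b i j)\<^sup>2) \<le> \<sigma>\<^sup>2" if "i \<in> {1..n}" for i
    using that unfolding sigma_def by (intro sqrt_le_D Max_ge) auto
  have Gamma_le: "(\<Sum>u\<in>Gamma n p s v. cycle_weight b u) \<le> \<sigma> ^ (2 * (m_shape s - 1))"
    if "v \<in> {1..n}" "s \<in> shapes_even n p" for v s
  proof -
    have "(\<Sum>u\<in>Gamma n p s v. cycle_weight b u) \<le> (\<sigma>\<^sup>2) ^ (m_shape s - 1)"
      using sym le_1 row that \<open>p > 0\<close> by (rule sum_Gamma_cycle_weight_le)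
    then show ?thesis by (simp add: power_mult)
  qed
  have "(\<integral>g. mat_trace n (mat_pow n (gauss_mat b g) (2 * p)) \<partial>(\<Pi>\<^sub>M ij\<in>lower_idx n. std_normal_distribution))
      \<le> real n * (\<Sum>s\<in>shapes_even n p. \<sigma> ^ (2 * (m_shape s - 1)) * moment_weight (2 * p) s)"
    using sym \<open>p > 0\<close> Gamma_le by (rule expected_trace_gauss_mat_le)
  then show ?thesis
    using Gamma_le by (simp add: moment_weight_def)
qed

end
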